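(* For every integer $T>0$ and real $\lambda>0$: (i) with $r=\sqrt{T+1}\,n$ and $n\ge r^2/\lambda^2$, $\mathsf{VC}\text{-}\mathsf{dim}\big(\mathbb{H}_{r,\lambda}(\mathcal{E}_{\mathsf{WL}}(n,d_T))\big)\in\Theta(r^2/\lambda^2)$; (ii) with $r=\sqrt{T/(T+1)}$ and $n\ge r^2/\lambda^2$, $\mathsf{VC}\text{-}\mathsf{dim}\big(\mathbb{H}_{1,\lambda}(\overline{\mathcal{E}}_{\mathsf{WL}}(n,d_T))\big)\in\Theta(1/\lambda^2)$.
   Context: $\mathcal{G}_n$ is the set of (unlabeled, simple, undirected) graphs on $n$ vertices. $1$-WL colouring: $C^1_0$ constant, $C^1_t(v)=\mathsf{RELABEL}(C^1_{t-1}(v),\{\!\{C^1_{t-1}(u):u\in N(v)\}\!\})$ with a fixed injective $\mathsf{RELABEL}$ shared by all graphs. Let $\Sigma_t$ be the (finite) set of colours occurring at round $t$ over all graphs in $\mathcal{G}_n$; $\phi_t(G)\in\mathbb{R}^{\Sigma_t}$ has entry $\phi_t(G)_c=|\{v:C^1_t(v)=c\}|$, and $\phi^{(T)}_{\mathsf{WL}}(G)=[\phi_0(G),\dots,\phi_T(G)]\in\mathbb{R}^{d_T}$ (concatenation), $\overline{\phi^{(T)}_{\mathsf{WL}}}(G)=\phi^{(T)}_{\mathsf{WL}}(G)/\|\phi^{(T)}_{\mathsf{WL}}(G)\|$ (Euclidean norm). $\mathcal{E}_{\mathsf{WL}}(n,d_T)=\{\phi^{(T)}_{\mathsf{WL}}\}$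 and $\overline{\mathcal{E}}_{\mathsf{WL}}(n,d_T)=\{\overline{\phi^{(T)}_{\mathsf{WL}}}\}$ (as maps $\mathcal{G}_n\to\mathbb{R}^{d_T}$). A labelled sample $(\mathbf{x}_1,y_1),\dots,(\mathbf{x}_s,y_s)\in\mathbb{R}^d\times\{0,1\}$ is $(r,\lambda)$-separable if all $\mathbf{x}_i$ lie in some Euclidean ball of radius $r$ and the Euclidean distance between the convex hulls of $\{\mathbf{x}_i:y_i=0\}$ and $\{\mathbf{x}_i:y_i=1\}$ is at least $2\lambda$. For a class $\mathcal{E}$ of maps $\mathcal{G}_n\to\mathbb{R}^d$, $\mathbb{H}_{r,\lambda}(\mathcal{E})$ is the set of partial concepts $h:\mathcal{G}_n\to\{0,1,\star\}$ such that for all $G_1,\dots,G_s$ in $\mathrm{supp}(h)=\{G:h(G)\ne\star\}$ there is $\mathrm{emb}\in\mathcal{E}$ with $(\mathrm{emb}(G_1),h(G_1)),\dots,(\mathrm{emb}(G_s),h(G_s))$ $(r,\lambda)$-separable. The VC dimension of a partial concept class is the largest $m$ such that some $\{x_1,\dots,x_m\}$ is shattered, i.e. for every $\tau\in\{0,1\}^m$ there is $h$ in the class with $h(x_i)=\tau_i$ for all $i$. *)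

theory Defs
  imports "HOL-Analysis.Analysis" "HOL-Library.Multiset"
begin

definition graph_on :: "nat \<Rightarrow> nat set set \<Rightarrow> bool" where
  "graph_on n E \<longleftrightarrow> E \<subseteq> {{u, v} | u v. u < n \<and> v < n \<and> u \<noteq> v}"

definition graph_iso :: "nat \<Rightarrow> nat set set \<Rightarrow> nat set set \<Rightarrow> bool" where
  "graph_iso n E E' \<longleftrightarrow> (\<exists>f. bij_betw f {..<n} {..<n} \<and>
      (\<forall>u<n. \<forall>v<n. {u, v} \<in> E \<longleftrightarrow> {f u, f v} \<in> E'))"

text \<open>Unlabelled graphs = isomorphism classes of labelled graphs; G_n is the set of them.\<close>

definition iso_class :: "nat \<Rightarrow> nat set set \<Rightarrow> nat set set set" where
  "iso_class n E = {E'. graph_on n E' \<and> graph_iso n E E'}"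

definition graphs :: "nat \<Rightarrow> nat set set set set" where
  "graphs n = iso_class n ` {E. graph_on n E}"

definition nbrs :: "nat set set \<Rightarrow> nat \<Rightarrow> nat set" where
  "nbrs E v = {u. {u, v} \<in> E}"

text \<open>Colours are represented canonically: the injective RELABEL is the constructor
  WLc applied to (old colour, multiset of neighbour colours); the initial colour is WL0.\<close>

datatype wlcol = WL0 | WLc wlcol "wlcol multiset"

fun wl :: "nat set set \<Rightarrow> nat \<Rightarrow> nat \<Rightarrow> wlcol" where
  "wl E 0 v = WL0"
| "wl E (Suc t) v = WLc (wl E t v) (image_mset (\<lambda>u. wl E t u) (mset_set (nbrs E v)))"

definition wl_colours :: "nat \<Rightarrow> nat \<Rightarrow> wlcol set" where
  "wl_colours n t = {wl E t v | E v. graph_on n E \<and> v < n}"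

text \<open>Coordinates of R^{d_T}: pairs (t, c) with t \<le> T and c \<in> Sigma_t (the concatenation
  of the blocks phi_0, ..., phi_T).\<close>

definition wl_index :: "nat \<Rightarrow> nat \<Rightarrow> (nat \<times> wlcol) set" where
  "wl_index n T = {(t, c). t \<le> T \<and> c \<in> wl_colours n t}"

definition wl_dim :: "nat \<Rightarrow> nat \<Rightarrow> nat" where
  "wl_dim n T = card (wl_index n T)"

definition phi_lab :: "nat \<Rightarrow> nat \<Rightarrow> nat set set \<Rightarrow> (nat \<times> wlcol) \<Rightarrow> real" where
  "phi_lab n T E = (\<lambda>(t, c). if (t, c) \<in> wl_index n T
      then real (card {v. v < n \<and> wl E t v = c}) else 0)"

definition enorm :: "'i set \<Rightarrow> ('i \<Rightarrow> real) \<Rightarrow> real" where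
  "enorm I x = sqrt (\<Sum>i\<in>I. (x i)\<^sup>2)"

definition edist :: "'i set \<Rightarrow> ('i \<Rightarrow> real) \<Rightarrow> ('i \<Rightarrow> real) \<Rightarrow> real" where
  "edist I x y = enorm I (\<lambda>i. x i - y i)"

text \<open>The WL embedding phi^(T)_WL on unlabelled graphs (via any representative;
  it is isomorphism invariant) and its normalisation.\<close>

definition phi_wl :: "nat \<Rightarrow> nat \<Rightarrow> nat set set set \<Rightarrow> (nat \<times> wlcol) \<Rightarrow> real" where
  "phi_wl n T G = phi_lab n T (SOME E. E \<in> G)"

definition phi_wl_norm :: "nat \<Rightarrow> nat \<Rightarrow> nat set set set \<Rightarrow> (nat \<times> wlcol) \<Rightarrow> real" where
  "phi_wl_norm n T G = (\<lambda>i. phi_wl n T G i / enorm (wl_index n T) (phi_wl n T G))"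

definition E_WL :: "nat \<Rightarrow> nat \<Rightarrow> (nat set set set \<Rightarrow> (nat \<times> wlcol) \<Rightarrow> real) set" where
  "E_WL n T = {phi_wl n T}"

definition E_WL_norm :: "nat \<Rightarrow> nat \<Rightarrow> (nat set set set \<Rightarrow> (nat \<times> wlcol) \<Rightarrow> real) set" where
  "E_WL_norm n T = {phi_wl_norm n T}"

definition conv_hull :: "('i \<Rightarrow> real) set \<Rightarrow> ('i \<Rightarrow> real) set" where
  "conv_hull S = {(\<lambda>i. \<Sum>s\<in>S. a s * s i) | a. (\<forall>s\<in>S. 0 \<le> a s) \<and> sum a S = 1}"

text \<open>(r, lambda)-separability of a labelled sample in R^I (labels: False = 0, True = 1).
  The distance between the hulls is at least 2 lambda iff every pair of points of the two
  hulls has distance at least 2 lambda (vacuous if one class is empty).\<close>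

definition separable :: "'i set \<Rightarrow> real \<Rightarrow> real \<Rightarrow> (('i \<Rightarrow> real) \<times> bool) list \<Rightarrow> bool" where
  "separable I r lam S \<longleftrightarrow>
     (\<exists>z. \<forall>p\<in>set S. edist I z (fst p) \<le> r) \<and>
     (\<forall>p\<in>conv_hull {fst q | q. q \<in> set S \<and> \<not> snd q}.
        \<forall>p'\<in>conv_hull {fst q | q. q \<in> set S \<and> snd q}. 2 * lam \<le> edist I p p')"

text \<open>Partial concepts on G_n: None plays the role of the undefined value (star);
  they are undefined outside G_n.\<close>

definition supp :: "('a \<Rightarrow> bool option) \<Rightarrow> 'a set" where
  "supp h = {x. h x \<noteq> None}"

definition H_class :: "nat \<Rightarrow> 'i set \<Rightarrow> (nat set set set \<Rightarrow> 'i \<Rightarrow> real) set \<Rightarrow> real \<Rightarrow> real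
    \<Rightarrow> (nat set set set \<Rightarrow> bool option) set" where
  "H_class n I Emb r lam = {h. supp h \<subseteq> graphs n \<and>
     (\<forall>Gs. set Gs \<subseteq> supp h \<longrightarrow>
        (\<exists>emb\<in>Emb. separable I r lam (map (\<lambda>G. (emb G, the (h G))) Gs)))}"

definition shatters :: "('a \<Rightarrow> bool option) set \<Rightarrow> 'a set \<Rightarrow> bool" where
  "shatters H A \<longleftrightarrow> (\<forall>\<tau> :: 'a \<Rightarrow> bool. \<exists>h\<in>H. \<forall>x\<in>A. h x = Some (\<tau> x))"

definition vc_dim :: "'a set \<Rightarrow> ('a \<Rightarrow> bool option) set \<Rightarrow> nat" where
  "vc_dim X H = Sup {card A | A. A \<subseteq> X \<and> finite A \<and> shatters H A}"

end

theory Submission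
  imports Defs
begin

text \<open>
  Upper bound: a single embedding places the shattered graphs in a ball of radius \<open>r\<close>. Split
  \<open>2k\<close> of them into pairs and choose, greedily by the parallelogram law, which member of each
  pair gets label 0; then the two label centroids differ by an average of \<open>k\<close> signed pair
  differences, of squared norm at most \<open>4r\<^sup>2/k\<close>. A margin of \<open>2\<lambda>\<close> forces
  \<open>k \<le> r\<^sup>2/\<lambda>\<^sup>2\<close>.

  Lower bound: 1-WL gives all vertices of a \<open>d\<close>-regular graph the same colour in every round,
  and from round 1 on this colour determines \<open>d\<close>. Hence the circulant graphs of degrees
  \<open>0, 2, \<dots>, 2(m - 1)\<close> are embedded as \<open>\<alpha>\<close> times indicator vectors of \<open>T + 1\<close>
  coordinates that overlap only in round 0. Two convex combinations of disjoint groups of them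
  differ on the private blocks by at least \<open>T\<alpha>\<^sup>2 (\<Sum>a\<^sub>i\<^sup>2 + \<Sum>b\<^sub>j\<^sup>2) \<ge> 2T\<alpha>\<^sup>2/m\<close>
  in squared norm, so every labelling is separable with margin \<open>\<lambda>\<close> as long as
  \<open>4\<lambda>\<^sup>2 m \<le> 2T\<alpha>\<^sup>2\<close>, which allows \<open>m\<close> of order \<open>r\<^sup>2/\<lambda>\<^sup>2\<close>.
\<close>

section \<open>Upper bound: centroids of swapped pairs\<close>

lemma edist_nonneg: "0 \<le> edist I x y"
  unfolding edist_def enorm_def by (simp add: sum_nonneg)

lemma edist_power2: "(edist I x y)\<^sup>2 = (\<Sum>i\<in>I. (x i - y i)\<^sup>2)"
  unfolding edist_def enorm_def by (simp add: sum_nonneg)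

lemma sum_sq_diff_le_of_edist:
  assumes "edist I z x \<le> r" and "edist I z y \<le> r"
  shows "(\<Sum>i\<in>I. (x i - y i)\<^sup>2) \<le> 4 * r\<^sup>2"
proof -
  have r: "(edist I z x)\<^sup>2 \<le> r\<^sup>2" "(edist I z y)\<^sup>2 \<le> r\<^sup>2"
    using assms edist_nonneg by (auto intro!: power_mono)
  have "(x i - y i)\<^sup>2 \<le> 2 * (z i - x i)\<^sup>2 + 2 * (z i - y i)\<^sup>2" for i
    using zero_le_power2[of "2 * z i - x i - y i"] by (simp add: power2_eq_square algebra_simps)
  then have "(\<Sum>i\<in>I. (x i - y i)\<^sup>2) \<le> 2 * (edist I z x)\<^sup>2 + 2 * (edist I z y)\<^sup>2"
    unfolding edist_power2 by (simp add: sum_distrib_left flip: sum.distrib) (rule sum_mono)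
  with r show ?thesis by linarith
qed

lemma exists_signs_sum_sq_le:
  fixes v :: "nat \<Rightarrow> 'i \<Rightarrow> real"
  shows "\<exists>\<sigma>. (\<Sum>i\<in>I. (\<Sum>j<k. if \<sigma> j then - v j i else v j i)\<^sup>2) \<le> (\<Sum>j<k. \<Sum>i\<in>I. (v j i)\<^sup>2)"
proof (induction k)
  case 0
  show ?case by simp
next
  case (Suc k)
  then obtain \<sigma> where \<sigma>: "(\<Sum>i\<in>I. (\<Sum>j<k. if \<sigma> j then - v j i else v j i)\<^sup>2) \<le> (\<Sum>j<k. \<Sum>i\<in>I. (v j i)\<^sup>2)"
    by blast
  define s where "s i = (\<Sum>j<k. if \<sigma> j then - v j i else v j i)" for i
  have extend: "(\<Sum>j<Suc k. if (\<sigma>(k := b)) j then - v j i else v j i) = s i + (if b then - v k i else v k i)"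
    for b i unfolding s_def by (auto intro!: sum.cong)
  have parallelogram: "(\<Sum>i\<in>I. (s i + v k i)\<^sup>2) + (\<Sum>i\<in>I. (s i - v k i)\<^sup>2) = 2 * (\<Sum>i\<in>I. (s i)\<^sup>2) + 2 * (\<Sum>i\<in>I. (v k i)\<^sup>2)"
    by (simp add: sum.distrib[symmetric] sum_distrib_left power2_eq_square algebra_simps)
  then obtain b where "(\<Sum>i\<in>I. (s i + (if b then - v k i else v k i))\<^sup>2) \<le> (\<Sum>i\<in>I. (s i)\<^sup>2) + (\<Sum>i\<in>I. (v k i)\<^sup>2)"
  proof (cases "(\<Sum>i\<in>I. (s i + v k i)\<^sup>2) \<le> (\<Sum>i\<in>I. (s i)\<^sup>2) + (\<Sum>i\<in>I. (v k i)\<^sup>2)")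
    case False
    with parallelogram show ?thesis by (intro that[of True]) simp
  qed (intro that[of False], simp)
  with \<sigma> show ?case
    by (intro exI[of _ "\<sigma>(k := b)"]) (simp add: extend s_def)
qed

definition centroid :: "nat \<Rightarrow> (nat \<Rightarrow> 'i \<Rightarrow> real) \<Rightarrow> 'i \<Rightarrow> real" where
  "centroid k F = (\<lambda>i. (\<Sum>j<k. F j i) / real k)"

lemma centroid_in_conv_hull:
  assumes "finite S" and "0 < k" and "\<And>j. j < k \<Longrightarrow> F j \<in> S"
  shows "centroid k F \<in> conv_hull S"
proof -
  define a where "a s = real (card {j\<in>{..<k}. F j = s}) / real k" for s
  have F: "F ` {..<k} \<subseteq> S" using assms(3) by auto
  have "(\<Sum>s\<in>S. a s * s i) = (\<Sum>j<k. F j i) / real k" for i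
    using sum.group[OF _ assms(1) F, of "\<lambda>j. F j i"]
    by (simp add: a_def flip: sum_divide_distrib)
  moreover have "sum a S = 1"
    using sum.group[OF _ assms(1) F, of "\<lambda>_. 1 :: real"] assms(2)
    by (simp add: a_def flip: sum_divide_distrib)
  ultimately show ?thesis
    unfolding conv_hull_def centroid_def by (intro CollectI exI[of _ a]) (auto simp: a_def)
qed

lemma exists_swaps_centroids_close:
  fixes x y :: "nat \<Rightarrow> 'i \<Rightarrow> real"
  assumes "0 < k"
  shows "\<exists>\<sigma>. \<forall>z r. (\<forall>j<k. edist I z (x j) \<le> r \<and> edist I z (y j) \<le> r) \<longrightarrow>
    real k * (edist I (centroid k (\<lambda>j. if \<sigma> j then y j else x j))
                      (centroid k (\<lambda>j. if \<sigma> j then x j else y j)))\<^sup>2 \<le> 4 * r\<^sup>2"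
proof -
  define v where "v j i = x j i - y j i" for j i
  obtain \<sigma> where \<sigma>: "(\<Sum>i\<in>I. (\<Sum>j<k. if \<sigma> j then - v j i else v j i)\<^sup>2) \<le> (\<Sum>j<k. \<Sum>i\<in>I. (v j i)\<^sup>2)"
    using exists_signs_sum_sq_le by blast
  have diff: "centroid k (\<lambda>j. if \<sigma> j then y j else x j) i - centroid k (\<lambda>j. if \<sigma> j then x j else y j) i
      = (\<Sum>j<k. if \<sigma> j then - v j i else v j i) / real k" for i
    unfolding centroid_def v_def diff_divide_distrib[symmetric] sum_subtractf[symmetric]
    by (intro arg_cong[where f = "\<lambda>s. s / real k"] sum.cong) auto
  show ?thesis
  proof (intro exI allI impI)
    fix z r assume ball: "\<forall>j<k. edist I z (x j) \<le> r \<and> edist I z (y j) \<le> r"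
    define Q where "Q = (\<Sum>i\<in>I. (\<Sum>j<k. if \<sigma> j then - v j i else v j i)\<^sup>2)"
    have "(edist I (centroid k (\<lambda>j. if \<sigma> j then y j else x j))
                   (centroid k (\<lambda>j. if \<sigma> j then x j else y j)))\<^sup>2 = Q / (real k)\<^sup>2"
      unfolding edist_power2 diff power_divide Q_def by (rule sum_divide_distrib[symmetric])
    then have "real k * (edist I (centroid k (\<lambda>j. if \<sigma> j then y j else x j))
                            (centroid k (\<lambda>j. if \<sigma> j then x j else y j)))\<^sup>2 = Q / real k"
      using assms by (simp add: power2_eq_square)
    also have "\<dots> \<le> (\<Sum>j<k. \<Sum>i\<in>I. (v j i)\<^sup>2) / real k"
      using \<sigma> unfolding Q_def by (simp add: divide_right_mono)
    also have "\<dots> \<le> (\<Sum>j<k. 4 * r\<^sup>2) / real k"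
      using ball by (intro divide_right_mono sum_mono) (auto simp: v_def intro: sum_sq_diff_le_of_edist)
    also have "\<dots> = 4 * r\<^sup>2"
      using assms by simp
    finally show "real k * (edist I (centroid k (\<lambda>j. if \<sigma> j then y j else x j))
                            (centroid k (\<lambda>j. if \<sigma> j then x j else y j)))\<^sup>2 \<le> 4 * r\<^sup>2" .
  qed
qed

lemma separable_map_iff:
  "separable I r lam (map (\<lambda>G. (e G, \<tau> G)) Gs) \<longleftrightarrow>
    (\<exists>z. \<forall>G\<in>set Gs. edist I z (e G) \<le> r) \<and>
    (\<forall>p\<in>conv_hull (e ` {G\<in>set Gs. \<not> \<tau> G}). \<forall>p'\<in>conv_hull (e ` {G\<in>set Gs. \<tau> G}).
       2 * lam \<le> edist I p p')"
proof -
  have "{fst q | q. q \<in> set (map (\<lambda>G. (e G, \<tau> G)) Gs) \<and> \<not> snd q} = e ` {G\<in>set Gs. \<not> \<tau> G}"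
    "{fst q | q. q \<in> set (map (\<lambda>G. (e G, \<tau> G)) Gs) \<and> snd q} = e ` {G\<in>set Gs. \<tau> G}"
    by force+
  then show ?thesis
    unfolding separable_def by auto
qed

lemma shatters_subset: "shatters H A \<Longrightarrow> B \<subseteq> A \<Longrightarrow> shatters H B"
  unfolding shatters_def by blast

lemma shatters_H_classD:
  fixes e :: "nat set set set \<Rightarrow> 'i \<Rightarrow> real"
  assumes "shatters (H_class n I {e} r lam) A" and "finite A"
  shows "\<exists>z. \<forall>G\<in>A. edist I z (e G) \<le> r"
    and "\<forall>p\<in>conv_hull (e ` {G\<in>A. \<not> \<tau> G}). \<forall>p'\<in>conv_hull (e ` {G\<in>A. \<tau> G}). 2 * lam \<le> edist I p p'"
proof -
  obtain h where h: "h \<in> H_class n I {e} r lam" "\<forall>G\<in>A. h G = Some (\<tau> G)"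
    using assms(1) unfolding shatters_def by blast
  obtain Gs where Gs: "set Gs = A"
    using finite_list[OF assms(2)] by blast
  have "set Gs \<subseteq> supp h"
    using h(2) Gs by (auto simp: supp_def)
  then have "separable I r lam (map (\<lambda>G. (e G, the (h G))) Gs)"
    using h(1) unfolding H_class_def by blast
  moreover have "map (\<lambda>G. (e G, the (h G))) Gs = map (\<lambda>G. (e G, \<tau> G)) Gs"
    using h(2) Gs by simp
  ultimately have "separable I r lam (map (\<lambda>G. (e G, \<tau> G)) Gs)"
    by simp
  then show "\<exists>z. \<forall>G\<in>A. edist I z (e G) \<le> r"
    and "\<forall>p\<in>conv_hull (e ` {G\<in>A. \<not> \<tau> G}). \<forall>p'\<in>conv_hull (e ` {G\<in>A. \<tau> G}). 2 * lam \<le> edist I p p'"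
    unfolding separable_map_iff Gs by blast+
qed

lemma swapped_indices_neq:
  "(if \<sigma> j then 2 * j + 1 else 2 * j) \<noteq> (if \<sigma> j' then 2 * j' else 2 * j' + (1::nat))"
proof
  assume eq: "(if \<sigma> j then 2 * j + 1 else 2 * j) = (if \<sigma> j' then 2 * j' else 2 * j' + (1::nat))"
  then have "j = j'"
    by (drule_tac arg_cong[where f = "\<lambda>i. i div 2"]) (simp split: if_splits)
  with eq show False
    by (simp split: if_splits)
qed

lemma exists_labelling_hulls_close:
  fixes e :: "'g \<Rightarrow> 'i \<Rightarrow> real"
  assumes k: "0 < k" and g: "inj_on g {..<2 * k}"
  shows "\<exists>\<tau>. \<forall>z r. (\<forall>i<2 * k. edist I z (e (g i)) \<le> r) \<longrightarrow>
    (\<exists>p\<in>conv_hull (e ` {G\<in>g ` {..<2 * k}. \<not> \<tau> G}). \<exists>p'\<in>conv_hull (e ` {G\<in>g ` {..<2 * k}. \<tau> G}).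
       real k * (edist I p p')\<^sup>2 \<le> 4 * r\<^sup>2)"
proof -
  obtain \<sigma> where \<sigma>: "\<forall>z r. (\<forall>j<k. edist I z (e (g (2*j))) \<le> r \<and> edist I z (e (g (2*j+1))) \<le> r) \<longrightarrow>
      real k * (edist I (centroid k (\<lambda>j. if \<sigma> j then e (g (2*j+1)) else e (g (2*j))))
                        (centroid k (\<lambda>j. if \<sigma> j then e (g (2*j)) else e (g (2*j+1)))))\<^sup>2 \<le> 4 * r\<^sup>2"
    using exists_swaps_centroids_close[OF k, where x = "\<lambda>j. e (g (2*j))" and y = "\<lambda>j. e (g (2*j+1))"]
    by blast
  define G0 where "G0 j = g (if \<sigma> j then 2*j+1 else 2*j)" for j
  define G1 where "G1 j = g (if \<sigma> j then 2*j else 2*j+1)" for j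
  define \<tau> where "\<tau> G \<longleftrightarrow> G \<in> G1 ` {..<k}" for G
  have G0_G1: "(\<lambda>j. if \<sigma> j then e (g (2*j+1)) else e (g (2*j))) = (\<lambda>j. e (G0 j))"
    "(\<lambda>j. if \<sigma> j then e (g (2*j)) else e (g (2*j+1))) = (\<lambda>j. e (G1 j))"
    by (auto simp: G0_def G1_def)
  have pairs: "G0 j \<in> g ` {..<2 * k}" "G1 j \<in> g ` {..<2 * k}" if "j < k" for j
    using that by (auto simp: G0_def G1_def)
  have "G0 j \<noteq> G1 j'" if "j < k" "j' < k" for j j'
    using inj_onD[OF g] swapped_indices_neq[of \<sigma> j j'] that unfolding G0_def G1_def by fastforce
  then have "centroid k (\<lambda>j. e (G0 j)) \<in> conv_hull (e ` {G\<in>g ` {..<2 * k}. \<not> \<tau> G})"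
    using k pairs by (intro centroid_in_conv_hull) (auto simp: \<tau>_def)
  moreover have "centroid k (\<lambda>j. e (G1 j)) \<in> conv_hull (e ` {G\<in>g ` {..<2 * k}. \<tau> G})"
    using k pairs by (intro centroid_in_conv_hull) (auto simp: \<tau>_def)
  moreover have "real k * (edist I (centroid k (\<lambda>j. e (G0 j))) (centroid k (\<lambda>j. e (G1 j))))\<^sup>2 \<le> 4 * r\<^sup>2"
    if "\<forall>i<2 * k. edist I z (e (g i)) \<le> r" for z r
    using \<sigma>[rule_format, of z r] that unfolding G0_G1 by simp
  ultimately show ?thesis
    by blast
qed

lemma card_le_of_shatters_H_class:
  fixes e :: "nat set set set \<Rightarrow> 'i \<Rightarrow> real"
  assumes A: "finite A" and shatters: "shatters (H_class n I {e} r lam) A" and lam: "0 < lam"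
  shows "real (card A) \<le> 2 * (r\<^sup>2 / lam\<^sup>2) + 1"
proof (cases "card A div 2 = 0")
  case True
  then show ?thesis
    by (intro add_increasing) simp_all
next
  case False
  define k where "k = card A div 2"
  have k: "0 < k" "card A \<le> 2 * k + 1"
    using False by (auto simp: k_def)
  obtain g where g: "bij_betw g {..<card A} A"
    using ex_bij_betw_nat_finite[OF A] by (auto simp: atLeast0LessThan)
  have "{..<2 * k} \<subseteq> {..<card A}"
    by (auto simp: k_def)
  then have "inj_on g {..<2 * k}" "g ` {..<2 * k} \<subseteq> A"
    using g by (auto simp: bij_betw_def inj_on_subset)
  moreover obtain \<tau> where \<tau>: "\<forall>z r. (\<forall>i<2 * k. edist I z (e (g i)) \<le> r) \<longrightarrow>
      (\<exists>p\<in>conv_hull (e ` {G\<in>g ` {..<2 * k}. \<not> \<tau> G}). \<exists>p'\<in>conv_hull (e ` {G\<in>g ` {..<2 * k}. \<tau> G}).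
         real k * (edist I p p')\<^sup>2 \<le> 4 * r\<^sup>2)"
    using exists_labelling_hulls_close[OF k(1) \<open>inj_on g {..<2 * k}\<close>] by blast
  ultimately have shatters_pairs: "shatters (H_class n I {e} r lam) (g ` {..<2 * k})"
    using shatters_subset[OF shatters] by blast
  have fin: "finite (g ` {..<2 * k})"
    by simp
  obtain z where "\<forall>i<2 * k. edist I z (e (g i)) \<le> r"
    using shatters_H_classD(1)[OF shatters_pairs fin] by blast
  moreover have "\<forall>p\<in>conv_hull (e ` {G\<in>g ` {..<2 * k}. \<not> \<tau> G}). \<forall>p'\<in>conv_hull (e ` {G\<in>g ` {..<2 * k}. \<tau> G}).
      2 * lam \<le> edist I p p'"
    by (rule shatters_H_classD(2)[OF shatters_pairs fin])
  ultimately obtain p p' where margin: "2 * lam \<le> edist I p p'" and close: "real k * (edist I p p')\<^sup>2 \<le> 4 * r\<^sup>2"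
    using \<tau> by blast
  have "real k * (2 * lam)\<^sup>2 \<le> real k * (edist I p p')\<^sup>2"
    using margin lam by (intro mult_left_mono power_mono) auto
  also have "\<dots> \<le> 4 * r\<^sup>2"
    by (rule close)
  finally have "real k \<le> r\<^sup>2 / lam\<^sup>2"
    using lam by (simp add: field_simps)
  with k(2) show ?thesis
    by linarith
qed

lemma vc_dim_le:
  assumes "0 \<le> B" and "\<And>A. A \<subseteq> X \<Longrightarrow> finite A \<Longrightarrow> shatters H A \<Longrightarrow> real (card A) \<le> B"
  shows "real (vc_dim X H) \<le> B"
proof (cases "{card A | A. A \<subseteq> X \<and> finite A \<and> shatters H A} = {}")
  case True
  then show ?thesis
    unfolding vc_dim_def True using assms(1) by simp
next
  case False
  have "vc_dim X H \<le> nat \<lfloor>B\<rfloor>"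
    unfolding vc_dim_def using assms(2) False by (intro cSup_least) (auto simp: le_nat_floor)
  then show ?thesis
    using assms(1) by linarith
qed

lemma card_le_vc_dim:
  assumes "A \<subseteq> X" and "finite X" and "shatters H A"
  shows "card A \<le> vc_dim X H"
  unfolding vc_dim_def using assms
  by (intro cSup_upper bdd_aboveI[of _ "card X"]) (auto intro: card_mono finite_subset)

lemma vc_dim_H_class_le:
  fixes e :: "nat set set set \<Rightarrow> 'i \<Rightarrow> real"
  assumes "0 < lam"
  shows "real (vc_dim X (H_class n I {e} r lam)) \<le> 2 * (r\<^sup>2 / lam\<^sup>2) + 1"
  using card_le_of_shatters_H_class[OF _ _ assms] by (intro vc_dim_le) auto

lemma shatters_H_classI:
  assumes "A \<subseteq> graphs n"
    and "\<And>\<tau> Gs. set Gs \<subseteq> A \<Longrightarrow> separable I r lam (map (\<lambda>G. (emb G, \<tau> G)) Gs)"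
  shows "shatters (H_class n I {emb} r lam) A"
  unfolding shatters_def
proof
  fix \<tau> :: "nat set set set \<Rightarrow> bool"
  define h where "h G = (if G \<in> A then Some (\<tau> G) else None)" for G
  have supp: "supp h = A"
    by (auto simp: supp_def h_def)
  have "map (\<lambda>G. (emb G, the (h G))) Gs = map (\<lambda>G. (emb G, \<tau> G)) Gs" if "set Gs \<subseteq> A" for Gs
    using that by (auto simp: h_def)
  then have "h \<in> H_class n I {emb} r lam"
    using assms unfolding H_class_def mem_Collect_eq supp by auto
  moreover have "\<forall>G\<in>A. h G = Some (\<tau> G)"
    by (simp add: h_def)
  ultimately show "\<exists>h\<in>H_class n I {emb} r lam. \<forall>G\<in>A. h G = Some (\<tau> G)"
    by blast
qed

lemma shatters_H_class_subset_graphs: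
  assumes "shatters (H_class n I Emb r lam) A"
  shows "A \<subseteq> graphs n"
proof -
  obtain h where "h \<in> H_class n I Emb r lam" "\<forall>G\<in>A. h G = Some True"
    using assms[unfolded shatters_def, rule_format, of "\<lambda>_. True"] by blast
  then show ?thesis
    unfolding H_class_def supp_def by auto
qed

section \<open>Lower bound: convex hulls of block vectors\<close>

lemma conv_comb_at_block:
  fixes a :: "('i \<Rightarrow> real) \<Rightarrow> real"
  assumes "finite S" "S \<subseteq> W" "w \<in> W" "i \<in> K w"
    and blocks: "\<And>w w' i. w \<in> W \<Longrightarrow> w' \<in> W \<Longrightarrow> i \<in> K w \<Longrightarrow> w' i = (if w' = w then \<alpha> else 0)"
  shows "(\<Sum>s\<in>S. a s * s i) = (if w \<in> S then a w * \<alpha> else 0)"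
proof -
  have "a s * s i = (if s = w then a w * \<alpha> else 0)" if "s \<in> S" for s
    using blocks[OF assms(3) _ assms(4), of s] that assms(2) by (auto simp: subset_iff)
  then have "(\<Sum>s\<in>S. a s * s i) = (\<Sum>s\<in>S. if s = w then a w * \<alpha> else 0)"
    by (rule sum.cong[OF refl])
  then show ?thesis
    using assms(1) by simp
qed

lemma one_le_card_mult_sum_sq:
  fixes a :: "'a \<Rightarrow> real"
  assumes "sum a S = 1" and "finite S" and "card S \<le> m"
  shows "1 \<le> real m * (\<Sum>s\<in>S. (a s)\<^sup>2)"
proof -
  have "1 \<le> (\<Sum>s\<in>S. (a s)\<^sup>2) * real (card S)"
    using sum_squared_le_sum_of_squares[of a S] assms(1) by simp
  also have "\<dots> \<le> real m * (\<Sum>s\<in>S. (a s)\<^sup>2)"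
    using assms(3) by (simp add: mult.commute mult_right_mono sum_nonneg)
  finally show ?thesis .
qed

lemma disjoint_blocks:
  assumes blocks: "\<And>w w' i. w \<in> W \<Longrightarrow> w' \<in> W \<Longrightarrow> i \<in> K w \<Longrightarrow> w' i = (if w' = w then \<alpha> else 0)"
    and "\<alpha> \<noteq> 0" and w: "w \<in> W" "w' \<in> W" "w \<noteq> w'"
  shows "K w \<inter> K w' = {}"
proof -
  have "w' i = 0" if "i \<in> K w" for i
    using blocks[OF w(1,2) that] w(3) by simp
  moreover have "w' i = \<alpha>" if "i \<in> K w'" for i
    using blocks[OF w(2,2) that] by simp
  ultimately show ?thesis
    using \<open>\<alpha> \<noteq> 0\<close> by fastforce
qed

lemma sum_sq_conv_comb_diff_ge:
  fixes K :: "('i \<Rightarrow> real) \<Rightarrow> 'i set" and a0 a1 :: "('i \<Rightarrow> real) \<Rightarrow> real"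
  assumes I: "finite I" and W: "finite W"
    and K: "\<And>w. w \<in> W \<Longrightarrow> K w \<subseteq> I \<and> card (K w) = T"
    and blocks: "\<And>w w' i. w \<in> W \<Longrightarrow> w' \<in> W \<Longrightarrow> i \<in> K w \<Longrightarrow> w' i = (if w' = w then \<alpha> else 0)"
    and \<alpha>: "\<alpha> \<noteq> 0"
    and S: "S0 \<subseteq> W" "S1 \<subseteq> W" "S0 \<inter> S1 = {}"
  shows "real T * \<alpha>\<^sup>2 * ((\<Sum>w\<in>S0. (a0 w)\<^sup>2) + (\<Sum>w\<in>S1. (a1 w)\<^sup>2))
    \<le> (\<Sum>i\<in>I. ((\<Sum>s\<in>S0. a0 s * s i) - (\<Sum>s\<in>S1. a1 s * s i))\<^sup>2)"
proof -
  define p where "p i = (\<Sum>s\<in>S0. a0 s * s i) - (\<Sum>s\<in>S1. a1 s * s i)" for i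
  have fin: "finite S0" "finite S1"
    using W S(1,2) finite_subset by blast+
  define a where "a w = (if w \<in> S0 then a0 w else - a1 w)" for w
  have p_block: "p i = a w * \<alpha>" if "w \<in> S0 \<union> S1" "i \<in> K w" for w i
  proof -
    have "w \<in> W"
      using that(1) S by blast
    have "(\<Sum>s\<in>S0. a0 s * s i) = (if w \<in> S0 then a0 w * \<alpha> else 0)"
      by (rule conv_comb_at_block[where K = K, OF fin(1) S(1) \<open>w \<in> W\<close> that(2) blocks])
    moreover have "(\<Sum>s\<in>S1. a1 s * s i) = (if w \<in> S1 then a1 w * \<alpha> else 0)"
      by (rule conv_comb_at_block[where K = K, OF fin(2) S(2) \<open>w \<in> W\<close> that(2) blocks])
    ultimately show ?thesis
      using that(1) S(3) unfolding p_def by (auto simp: a_def)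
  qed
  have "(\<Sum>w\<in>S1. real T * \<alpha>\<^sup>2 * (a w)\<^sup>2) = real T * \<alpha>\<^sup>2 * (\<Sum>w\<in>S1. (a1 w)\<^sup>2)"
    unfolding sum_distrib_left using S(3) by (intro sum.cong) (auto simp: a_def)
  then have "real T * \<alpha>\<^sup>2 * ((\<Sum>w\<in>S0. (a0 w)\<^sup>2) + (\<Sum>w\<in>S1. (a1 w)\<^sup>2))
      = (\<Sum>w\<in>S0. real T * \<alpha>\<^sup>2 * (a w)\<^sup>2) + (\<Sum>w\<in>S1. real T * \<alpha>\<^sup>2 * (a w)\<^sup>2)"
    by (simp add: a_def sum_distrib_left distrib_left)
  also have "\<dots> = (\<Sum>w\<in>S0 \<union> S1. real T * \<alpha>\<^sup>2 * (a w)\<^sup>2)"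
    by (rule sum.union_disjoint[OF fin S(3), symmetric])
  also have "\<dots> = (\<Sum>w\<in>S0 \<union> S1. \<Sum>i\<in>K w. (p i)\<^sup>2)"
    using K S(1,2) by (intro sum.cong) (auto simp: p_block power_mult_distrib)
  also have "\<dots> = (\<Sum>i\<in>(\<Union>w\<in>S0 \<union> S1. K w). (p i)\<^sup>2)"
  proof (rule sum.UNION_disjoint[symmetric])
    show "finite (S0 \<union> S1)"
      using fin by blast
    show "\<forall>w\<in>S0 \<union> S1. finite (K w)"
      using K S(1,2) I finite_subset by blast
    show "\<forall>w\<in>S0 \<union> S1. \<forall>w'\<in>S0 \<union> S1. w \<noteq> w' \<longrightarrow> K w \<inter> K w' = {}"
      using disjoint_blocks[OF blocks \<alpha>] S(1,2) by blast
  qed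
  also have "\<dots> \<le> (\<Sum>i\<in>I. (p i)\<^sup>2)"
    using K S(1,2) I by (intro sum_mono2) auto
  finally show ?thesis
    unfolding p_def .
qed

lemma conv_hull_block_dist:
  fixes K :: "('i \<Rightarrow> real) \<Rightarrow> 'i set"
  assumes I: "finite I" and W: "finite W" "card W \<le> m"
    and K: "\<And>w. w \<in> W \<Longrightarrow> K w \<subseteq> I \<and> card (K w) = T"
    and blocks: "\<And>w w' i. w \<in> W \<Longrightarrow> w' \<in> W \<Longrightarrow> i \<in> K w \<Longrightarrow> w' i = (if w' = w then \<alpha> else 0)"
    and \<alpha>: "\<alpha> \<noteq> 0"
    and S: "S0 \<subseteq> W" "S1 \<subseteq> W" "S0 \<inter> S1 = {}"
    and p: "p \<in> conv_hull S0" and p': "p' \<in> conv_hull S1"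
  shows "2 * real T * \<alpha>\<^sup>2 \<le> real m * (\<Sum>i\<in>I. (p i - p' i)\<^sup>2)"
proof -
  obtain a0 where a0: "p = (\<lambda>i. \<Sum>s\<in>S0. a0 s * s i)" "sum a0 S0 = 1"
    using p unfolding conv_hull_def by blast
  obtain a1 where a1: "p' = (\<lambda>i. \<Sum>s\<in>S1. a1 s * s i)" "sum a1 S1 = 1"
    using p' unfolding conv_hull_def by blast
  have fin: "finite S0" "finite S1"
    using W(1) S(1,2) finite_subset by blast+
  have card: "card S0 \<le> m" "card S1 \<le> m"
    using card_mono[OF W(1) S(1)] card_mono[OF W(1) S(2)] W(2) by simp_all
  have coeffs: "1 \<le> real m * (\<Sum>w\<in>S0. (a0 w)\<^sup>2)" "1 \<le> real m * (\<Sum>w\<in>S1. (a1 w)\<^sup>2)"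
    by (rule one_le_card_mult_sum_sq[OF a0(2) fin(1) card(1)], rule one_le_card_mult_sum_sq[OF a1(2) fin(2) card(2)])
  have sum_I: "real T * \<alpha>\<^sup>2 * ((\<Sum>w\<in>S0. (a0 w)\<^sup>2) + (\<Sum>w\<in>S1. (a1 w)\<^sup>2)) \<le> (\<Sum>i\<in>I. (p i - p' i)\<^sup>2)"
    unfolding a0(1) a1(1) by (rule sum_sq_conv_comb_diff_ge[OF I W(1) K blocks \<alpha> S])
  have "2 * real T * \<alpha>\<^sup>2 = real T * \<alpha>\<^sup>2 * (1 + 1)"
    by simp
  also have "\<dots> \<le> real T * \<alpha>\<^sup>2 * (real m * (\<Sum>w\<in>S0. (a0 w)\<^sup>2) + real m * (\<Sum>w\<in>S1. (a1 w)\<^sup>2))"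
    using coeffs by (intro mult_left_mono add_mono) auto
  also have "\<dots> = real m * (real T * \<alpha>\<^sup>2 * ((\<Sum>w\<in>S0. (a0 w)\<^sup>2) + (\<Sum>w\<in>S1. (a1 w)\<^sup>2)))"
    by (simp add: algebra_simps)
  also have "\<dots> \<le> real m * (\<Sum>i\<in>I. (p i - p' i)\<^sup>2)"
    using sum_I by (intro mult_left_mono) auto
  finally show ?thesis .
qed

section \<open>Colour refinement on regular graphs\<close>

fun regular_colour :: "nat \<Rightarrow> nat \<Rightarrow> wlcol" where
  "regular_colour 0 d = WL0"
| "regular_colour (Suc t) d = WLc (regular_colour t d) (replicate_mset d (regular_colour t d))"

lemma regular_colour_inj:
  assumes "0 < t" and "regular_colour t d = regular_colour t d'"
  shows "d = d'"
proof -
  obtain t' where t: "t = Suc t'"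
    using assms(1) gr0_implies_Suc by blast
  have "replicate_mset d (regular_colour t' d) = replicate_mset d' (regular_colour t' d')"
    using assms(2) unfolding t regular_colour.simps wlcol.inject by (rule conjunct2)
  then have "size (replicate_mset d (regular_colour t' d)) = size (replicate_mset d' (regular_colour t' d'))"
    by (rule arg_cong)
  then show ?thesis
    by simp
qed

definition regular_on :: "nat \<Rightarrow> nat set set \<Rightarrow> nat \<Rightarrow> bool" where
  "regular_on n E d \<longleftrightarrow> (\<forall>v<n. card (nbrs E v) = d)"

lemma nbrs_subset: "graph_on n E \<Longrightarrow> nbrs E v \<subseteq> {..<n}"
  unfolding graph_on_def nbrs_def by (auto simp: doubleton_eq_iff)

lemma finite_graph_on: "finite {E. graph_on n E}"
proof (rule finite_subset)
  show "{E. graph_on n E} \<subseteq> Pow (Pow {..<n})"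
    unfolding graph_on_def by blast
qed simp

lemma finite_graphs: "finite (graphs n)"
  unfolding graphs_def using finite_graph_on by simp

lemma finite_wl_index: "finite (wl_index n T)"
proof -
  have "wl_colours n t \<subseteq> (\<lambda>(E, v). wl E t v) ` ({E. graph_on n E} \<times> {..<n})" for t
    unfolding wl_colours_def by auto
  then have "finite (wl_colours n t)" for t
    by (rule finite_subset) (simp add: finite_graph_on)
  moreover have "wl_index n T \<subseteq> (\<Union>t\<le>T. {t} \<times> wl_colours n t)"
    unfolding wl_index_def by auto
  ultimately show ?thesis
    by (simp add: finite_subset)
qed

lemma wl_regular_on:
  assumes E: "graph_on n E" and d: "regular_on n E d" and "v < n"
  shows "wl E t v = regular_colour t d"
  using \<open>v < n\<close>
proof (induction t arbitrary: v)
  case 0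
  show ?case by simp
next
  case (Suc t)
  have fin: "finite (nbrs E v)"
    using nbrs_subset[OF E] finite_subset by blast
  have "image_mset (\<lambda>u. wl E t u) (mset_set (nbrs E v)) = image_mset (\<lambda>u. regular_colour t d) (mset_set (nbrs E v))"
    using Suc.IH nbrs_subset[OF E] fin by (intro image_mset_cong) auto
  also have "\<dots> = replicate_mset d (regular_colour t d)"
    using d Suc.prems by (simp add: image_mset_const_eq regular_on_def)
  finally show ?case
    using Suc by simp
qed

lemma nbrs_graph_iso:
  assumes E: "graph_on n E" and E': "graph_on n E'" and f: "bij_betw f {..<n} {..<n}"
    and edges: "\<forall>u<n. \<forall>v<n. {u, v} \<in> E \<longleftrightarrow> {f u, f v} \<in> E'" and v: "v < n"
  shows "nbrs E' (f v) = f ` nbrs E v"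
proof
  show "nbrs E' (f v) \<subseteq> f ` nbrs E v"
  proof
    fix u' assume u': "u' \<in> nbrs E' (f v)"
    then obtain u where "u < n" "u' = f u"
      using nbrs_subset[OF E'] f by (metis bij_betw_imp_surj_on imageE lessThan_iff subsetD)
    with u' show "u' \<in> f ` nbrs E v"
      using edges v unfolding nbrs_def by auto
  qed
  show "f ` nbrs E v \<subseteq> nbrs E' (f v)"
    using nbrs_subset[OF E] edges v unfolding nbrs_def by auto
qed

lemma regular_on_graph_iso:
  assumes E: "graph_on n E" and E': "graph_on n E'" and iso: "graph_iso n E E'" and d: "regular_on n E d"
  shows "regular_on n E' d"
  unfolding regular_on_def
proof (intro allI impI)
  fix w assume "w < n"
  obtain f where f: "bij_betw f {..<n} {..<n}" and edges: "\<forall>u<n. \<forall>v<n. {u, v} \<in> E \<longleftrightarrow> {f u, f v} \<in> E'"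
    using iso unfolding graph_iso_def by blast
  then obtain v where v: "v < n" "w = f v"
    using \<open>w < n\<close> by (metis bij_betw_imp_surj_on imageE lessThan_iff)
  have "inj_on f (nbrs E v)"
    using bij_betw_imp_inj_on[OF f] nbrs_subset[OF E] inj_on_subset by blast
  then have "card (nbrs E' w) = card (nbrs E v)"
    using nbrs_graph_iso[OF E E' f edges v(1)] v(2) by (simp add: card_image)
  then show "card (nbrs E' w) = d"
    using d v(1) unfolding regular_on_def by simp
qed

lemma regular_colour_in_wl_index:
  assumes "graph_on n E" and "regular_on n E d" and "0 < n" and "t \<le> T"
  shows "(t, regular_colour t d) \<in> wl_index n T"
proof -
  have "regular_colour t d = wl E t 0"
    using wl_regular_on[OF assms(1,2,3)] by simp
  then show ?thesis
    using assms(1,3,4) unfolding wl_index_def wl_colours_def by blast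
qed

definition regular_profile :: "nat \<Rightarrow> real \<Rightarrow> nat \<Rightarrow> nat \<times> wlcol \<Rightarrow> real" where
  "regular_profile T \<alpha> d = (\<lambda>(t, c). if t \<le> T \<and> c = regular_colour t d then \<alpha> else 0)"

lemma phi_wl_regular_on:
  assumes E: "graph_on n E" and d: "regular_on n E d" and n: "0 < n"
  shows "phi_wl n T (iso_class n E) = regular_profile T (real n) d"
proof -
  define E' where "E' = (SOME E'. E' \<in> iso_class n E)"
  have "E \<in> iso_class n E"
    using E unfolding iso_class_def graph_iso_def by (auto intro!: exI[of _ id])
  then have "E' \<in> iso_class n E"
    unfolding E'_def by (rule someI)
  then have E': "graph_on n E'" and d': "regular_on n E' d"
    using regular_on_graph_iso[OF E _ _ d] unfolding iso_class_def by auto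
  have "phi_lab n T E' (t, c) = regular_profile T (real n) d (t, c)" for t c
  proof -
    have "{v. v < n \<and> wl E' t v = c} = {v. v < n \<and> regular_colour t d = c}"
      using wl_regular_on[OF E' d'] by (intro Collect_cong conj_cong refl) simp
    then have count: "real (card {v. v < n \<and> wl E' t v = c}) = (if c = regular_colour t d then real n else 0)"
      by auto
    have index: "(t, c) \<in> wl_index n T \<and> c = regular_colour t d \<longleftrightarrow> t \<le> T \<and> c = regular_colour t d"
      using regular_colour_in_wl_index[OF E' d' n] unfolding wl_index_def by blast
    show ?thesis
      unfolding phi_lab_def regular_profile_def using count index by auto
  qed
  then show ?thesis
    unfolding phi_wl_def E'_def[symmetric] by (simp add: fun_eq_iff split_paired_all)
qed

lemma sum_sq_regular_profile:
  assumes "finite I" and "\<And>t. t \<le> T \<Longrightarrow> (t, regular_colour t d) \<in> I"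
  shows "(\<Sum>i\<in>I. (regular_profile T \<alpha> d i)\<^sup>2) = (real T + 1) * \<alpha>\<^sup>2"
proof -
  let ?J = "(\<lambda>t. (t, regular_colour t d)) ` {..T}"
  have "(\<Sum>i\<in>I. (regular_profile T \<alpha> d i)\<^sup>2) = (\<Sum>i\<in>?J. (regular_profile T \<alpha> d i)\<^sup>2)"
    using assms by (intro sum.mono_neutral_right) (auto simp: regular_profile_def)
  also have "\<dots> = (\<Sum>i\<in>?J. \<alpha>\<^sup>2)"
    by (intro sum.cong) (auto simp: regular_profile_def)
  also have "\<dots> = (real T + 1) * \<alpha>\<^sup>2"
    by (simp add: card_image inj_on_def)
  finally show ?thesis .
qed

lemma phi_wl_norm_regular_on:
  assumes E: "graph_on n E" and d: "regular_on n E d" and n: "0 < n"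
  shows "phi_wl_norm n T (iso_class n E) = regular_profile T (1 / sqrt (real T + 1)) d"
proof -
  have "(\<Sum>i\<in>wl_index n T. (regular_profile T (real n) d i)\<^sup>2) = (real T + 1) * (real n)\<^sup>2"
    using regular_colour_in_wl_index[OF E d n] by (intro sum_sq_regular_profile finite_wl_index)
  then have "enorm (wl_index n T) (phi_wl n T (iso_class n E)) = sqrt (real T + 1) * real n"
    unfolding enorm_def phi_wl_regular_on[OF E d n] by (simp add: real_sqrt_mult)
  then show ?thesis
    unfolding phi_wl_norm_def phi_wl_regular_on[OF E d n] using n
    by (auto simp: regular_profile_def)
qed

lemma regular_profile_at:
  assumes "0 < t" and "t \<le> T"
  shows "regular_profile T \<alpha> d' (t, regular_colour t d) = (if d' = d then \<alpha> else 0)"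
  using assms regular_colour_inj[OF assms(1), of d d'] unfolding regular_profile_def by auto

lemma regular_profile_inj:
  assumes "0 < T" and "\<alpha> \<noteq> 0" and "regular_profile T \<alpha> d = regular_profile T \<alpha> d'"
  shows "d = d'"
proof -
  have "\<alpha> = regular_profile T \<alpha> d (1, regular_colour 1 d)"
    using regular_profile_at[of 1 T] assms(1) by simp
  also have "\<dots> = (if d' = d then \<alpha> else 0)"
    using regular_profile_at[of 1 T] assms(1,3) by simp
  finally show ?thesis
    using assms(2) by (simp split: if_splits)
qed

definition circulant_offsets :: "nat \<Rightarrow> nat \<Rightarrow> int set" where
  "circulant_offsets n k = {1..int k} \<union> {int n - int k..int n - 1}"

text \<open>Vertices \<open>u\<close> and \<open>w\<close> of \<open>circulant n k\<close> are adjacent iff their cyclic distance lies in \<open>1..k\<close>.\<close>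

definition circulant :: "nat \<Rightarrow> nat \<Rightarrow> nat set set" where
  "circulant n k = {{u, w} | u w. u < n \<and> w < n \<and> (int w - int u) mod int n \<in> circulant_offsets n k}"

lemma circulant_offsets_bounds:
  "2 * k < n \<Longrightarrow> j \<in> circulant_offsets n k \<Longrightarrow> 1 \<le> j \<and> j \<le> int n - 1"
  unfolding circulant_offsets_def by auto

lemma card_circulant_offsets: "2 * k < n \<Longrightarrow> card (circulant_offsets n k) = 2 * k"
  unfolding circulant_offsets_def by (subst card_Un_disjoint) auto

lemma uminus_mod_in_circulant_offsets:
  assumes k: "2 * k < n" and x: "x mod int n \<in> circulant_offsets n k"
  shows "(- x) mod int n \<in> circulant_offsets n k"
proof -
  have "1 \<le> x mod int n" "x mod int n \<le> int n - 1"
    using circulant_offsets_bounds[OF k x] by auto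
  then have "(- x) mod int n = int n - x mod int n"
    by (simp add: zmod_zminus1_eq_if)
  with x show ?thesis
    using \<open>1 \<le> x mod int n\<close> unfolding circulant_offsets_def by auto
qed

lemma graph_on_circulant: "2 * k < n \<Longrightarrow> graph_on n (circulant n k)"
  unfolding graph_on_def circulant_def
  using circulant_offsets_bounds[of k n 0] by fastforce

lemma nbrs_circulant:
  assumes k: "2 * k < n" and v: "v < n"
  shows "nbrs (circulant n k) v = {u. u < n \<and> (int u - int v) mod int n \<in> circulant_offsets n k}"
proof -
  have "(int u - int v) mod int n \<in> circulant_offsets n k" if "(int v - int u) mod int n \<in> circulant_offsets n k" for u
    using uminus_mod_in_circulant_offsets[OF k that] by simp
  then show ?thesis
    using v unfolding nbrs_def circulant_def by (auto simp: doubleton_eq_iff insert_commute)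
qed

lemma bij_betw_nbrs_circulant_offsets:
  assumes k: "2 * k < n" and v: "v < n"
  shows "bij_betw (\<lambda>u. (int u - int v) mod int n) (nbrs (circulant n k) v) (circulant_offsets n k)"
proof (rule bij_betw_imageI)
  have n: "0 < int n"
    using k by simp
  show "inj_on (\<lambda>u. (int u - int v) mod int n) (nbrs (circulant n k) v)"
  proof (rule inj_onI)
    fix u u' assume "u \<in> nbrs (circulant n k) v" "u' \<in> nbrs (circulant n k) v"
      and "(int u - int v) mod int n = (int u' - int v) mod int n"
    then have u: "u < n" "u' < n" and "int n dvd int u - int u'"
      unfolding nbrs_circulant[OF k v] by (auto simp: mod_eq_dvd_iff)
    then have "int u mod int n = int u' mod int n"
      by (simp only: mod_eq_dvd_iff)
    with u show "u = u'"
      by simp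
  qed
  have "j \<in> (\<lambda>u. (int u - int v) mod int n) ` nbrs (circulant n k) v" if j: "j \<in> circulant_offsets n k" for j
  proof
    define u where "u = nat ((int v + j) mod int n)"
    have u: "int u = (int v + j) mod int n"
      unfolding u_def using n by simp
    moreover have "u < n"
      using u pos_mod_bound[OF n, of "int v + j"] by linarith
    ultimately show "u \<in> nbrs (circulant n k) v"
      using j circulant_offsets_bounds[OF k j] unfolding nbrs_circulant[OF k v]
      by (simp add: mod_diff_left_eq)
    show "j = (int u - int v) mod int n"
      using u circulant_offsets_bounds[OF k j] by (simp add: mod_diff_left_eq)
  qed
  then show "(\<lambda>u. (int u - int v) mod int n) ` nbrs (circulant n k) v = circulant_offsets n k"
    unfolding nbrs_circulant[OF k v] by auto
qed

lemma regular_on_circulant: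
  assumes "2 * k < n"
  shows "regular_on n (circulant n k) (2 * k)"
  using bij_betw_same_card[OF bij_betw_nbrs_circulant_offsets[OF assms]] card_circulant_offsets[OF assms]
  unfolding regular_on_def by simp

lemma regular_profile_blocks:
  assumes T: "0 < T" and \<alpha>: "\<alpha> \<noteq> 0" and I: "\<And>d t. d \<in> D \<Longrightarrow> t \<le> T \<Longrightarrow> (t, regular_colour t d) \<in> I"
    and K: "K = (\<lambda>w. {i\<in>I. 0 < fst i \<and> w i \<noteq> 0})"
  shows "\<And>w. w \<in> regular_profile T \<alpha> ` D \<Longrightarrow> K w \<subseteq> I \<and> card (K w) = T"
    and "\<And>w w' i. w \<in> regular_profile T \<alpha> ` D \<Longrightarrow> w' \<in> regular_profile T \<alpha> ` D \<Longrightarrow> i \<in> K w \<Longrightarrow>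
           w' i = (if w' = w then \<alpha> else 0)"
proof -
  have support: "K (regular_profile T \<alpha> d) = (\<lambda>t. (t, regular_colour t d)) ` {1..T}" if "d \<in> D" for d
    using I[OF that] \<alpha> unfolding K regular_profile_def by (auto split: if_splits)
  show "K w \<subseteq> I \<and> card (K w) = T" if "w \<in> regular_profile T \<alpha> ` D" for w
    using that support unfolding K by (auto simp: card_image inj_on_def)
  show "w' i = (if w' = w then \<alpha> else 0)"
    if w: "w \<in> regular_profile T \<alpha> ` D" "w' \<in> regular_profile T \<alpha> ` D" "i \<in> K w" for w w' i
  proof -
    obtain d d' where d: "d \<in> D" "w = regular_profile T \<alpha> d" and d': "w' = regular_profile T \<alpha> d'"
      using w(1,2) by blast
    then obtain t where "0 < t" "t \<le> T" "i = (t, regular_colour t d)"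
      using w(3) support by auto
    moreover have "w' = w \<longleftrightarrow> d' = d"
      using regular_profile_inj[OF T \<alpha>] d d' by blast
    ultimately show ?thesis
      using regular_profile_at d d' by simp
  qed
qed

lemma edist_zero_regular_profile:
  assumes "finite I" and "\<And>t. t \<le> T \<Longrightarrow> (t, regular_colour t d) \<in> I" and "0 \<le> \<alpha>"
  shows "edist I (\<lambda>_. 0) (regular_profile T \<alpha> d) = sqrt (real T + 1) * \<alpha>"
proof -
  have "(\<Sum>i\<in>I. (0 - regular_profile T \<alpha> d i)\<^sup>2) = (real T + 1) * \<alpha>\<^sup>2"
    using sum_sq_regular_profile[OF assms(1,2)] by simp
  then show ?thesis
    using assms(3) unfolding edist_def enorm_def by (simp add: real_sqrt_mult)
qed

lemma conv_hull_regular_profiles_dist: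
  assumes T: "0 < T" and \<alpha>: "\<alpha> \<noteq> 0" and I: "finite I"
    and D: "finite D" "card D \<le> m" and in_I: "\<And>d t. d \<in> D \<Longrightarrow> t \<le> T \<Longrightarrow> (t, regular_colour t d) \<in> I"
    and S: "S0 \<subseteq> regular_profile T \<alpha> ` D" "S1 \<subseteq> regular_profile T \<alpha> ` D" "S0 \<inter> S1 = {}"
    and p: "p \<in> conv_hull S0" and p': "p' \<in> conv_hull S1"
  shows "2 * real T * \<alpha>\<^sup>2 \<le> real m * (edist I p p')\<^sup>2"
proof -
  define W where "W = regular_profile T \<alpha> ` D"
  \<comment> \<open>all profiles share the round-0 coordinate, so the disjoint blocks start at round 1\<close>
  define K where "K = (\<lambda>w :: nat \<times> wlcol \<Rightarrow> real. {i\<in>I. 0 < fst i \<and> w i \<noteq> 0})"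
  have K_W: "\<And>w. w \<in> W \<Longrightarrow> K w \<subseteq> I \<and> card (K w) = T"
    unfolding W_def by (rule regular_profile_blocks(1)[OF T \<alpha> in_I K_def])
  have blocks: "\<And>w w' i. w \<in> W \<Longrightarrow> w' \<in> W \<Longrightarrow> i \<in> K w \<Longrightarrow> w' i = (if w' = w then \<alpha> else 0)"
    unfolding W_def by (rule regular_profile_blocks(2)[OF T \<alpha> in_I K_def])
  have W: "finite W" "card W \<le> m"
    using card_image_le[OF D(1), of "regular_profile T \<alpha>"] D unfolding W_def by simp_all
  show ?thesis
    unfolding edist_power2 by (rule conv_hull_block_dist[OF I W K_W blocks \<alpha> S[folded W_def] p p'])
qed

lemma separable_regular_profiles:
  fixes emb :: "'g \<Rightarrow> nat \<times> wlcol \<Rightarrow> real"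
  assumes T: "0 < T" and \<alpha>: "0 < \<alpha>" and I: "finite I"
    and D: "finite D" "card D \<le> m" and in_I: "\<And>d t. d \<in> D \<Longrightarrow> t \<le> T \<Longrightarrow> (t, regular_colour t d) \<in> I"
    and emb: "emb ` set Gs \<subseteq> regular_profile T \<alpha> ` D" "inj_on emb (set Gs)"
    and R: "sqrt (real T + 1) * \<alpha> \<le> R"
    and margin: "4 * lam\<^sup>2 * real m \<le> 2 * real T * \<alpha>\<^sup>2"
  shows "separable I R lam (map (\<lambda>G. (emb G, \<tau> G)) Gs)"
  unfolding separable_map_iff
proof
  have "edist I (\<lambda>_. 0) (emb G) \<le> R" if G: "G \<in> set Gs" for G
  proof -
    obtain d where "d \<in> D" "emb G = regular_profile T \<alpha> d"
      using emb(1) G by blast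
    then show ?thesis
      using edist_zero_regular_profile[OF I in_I[OF \<open>d \<in> D\<close>]] \<alpha> R by simp
  qed
  then show "\<exists>z. \<forall>G\<in>set Gs. edist I z (emb G) \<le> R"
    by blast
  have S: "emb ` {G\<in>set Gs. \<not> \<tau> G} \<subseteq> regular_profile T \<alpha> ` D" "emb ` {G\<in>set Gs. \<tau> G} \<subseteq> regular_profile T \<alpha> ` D"
    using emb(1) by auto
  moreover have "emb ` {G\<in>set Gs. \<not> \<tau> G} \<inter> emb ` {G\<in>set Gs. \<tau> G} = {}"
    using emb(2) by (auto dest: inj_onD)
  note S = S this
  show "\<forall>p\<in>conv_hull (emb ` {G\<in>set Gs. \<not> \<tau> G}). \<forall>p'\<in>conv_hull (emb ` {G\<in>set Gs. \<tau> G}).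
      2 * lam \<le> edist I p p'"
  proof (intro ballI)
    fix p p' assume p: "p \<in> conv_hull (emb ` {G\<in>set Gs. \<not> \<tau> G})" and p': "p' \<in> conv_hull (emb ` {G\<in>set Gs. \<tau> G})"
    have bound: "2 * real T * \<alpha>\<^sup>2 \<le> real m * (edist I p p')\<^sup>2"
      using \<alpha> by (intro conv_hull_regular_profiles_dist[OF T _ I D in_I S p p']) simp
    moreover have "0 < 2 * real T * \<alpha>\<^sup>2"
      using T \<alpha> by simp
    ultimately have "0 < real m * (edist I p p')\<^sup>2"
      by linarith
    then have "0 < real m"
      by (simp add: zero_less_mult_iff)
    moreover have "real m * (2 * lam)\<^sup>2 \<le> real m * (edist I p p')\<^sup>2"
      using margin bound by (simp add: power_mult_distrib mult_ac)
    ultimately have "(2 * lam)\<^sup>2 \<le> (edist I p p')\<^sup>2"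
      by simp
    then show "2 * lam \<le> edist I p p'"
      by (rule power2_le_imp_le) (rule edist_nonneg)
  qed
qed

lemma shatters_circulant_classes:
  fixes emb :: "nat set set set \<Rightarrow> nat \<times> wlcol \<Rightarrow> real"
  assumes T: "0 < T" and \<alpha>: "0 < \<alpha>" and m: "2 * m \<le> n + 1"
    and emb: "\<And>k. k < m \<Longrightarrow> emb (iso_class n (circulant n k)) = regular_profile T \<alpha> (2 * k)"
    and inj: "inj_on emb ((\<lambda>k. iso_class n (circulant n k)) ` {..<m})"
    and R: "sqrt (real T + 1) * \<alpha> \<le> R"
    and margin: "4 * lam\<^sup>2 * real m \<le> 2 * real T * \<alpha>\<^sup>2"
  shows "shatters (H_class n (wl_index n T) {emb} R lam) ((\<lambda>k. iso_class n (circulant n k)) ` {..<m})"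
proof (rule shatters_H_classI)
  have k: "2 * k < n" if "k < m" for k
    using that m by linarith
  then have circulant: "graph_on n (circulant n k)" "regular_on n (circulant n k) (2 * k)" if "k < m" for k
    using graph_on_circulant regular_on_circulant that by auto
  then show "(\<lambda>k. iso_class n (circulant n k)) ` {..<m} \<subseteq> graphs n"
    unfolding graphs_def by auto
  fix \<tau> Gs assume Gs: "set Gs \<subseteq> (\<lambda>k. iso_class n (circulant n k)) ` {..<m}"
  define D where "D = (\<lambda>k. 2 * k) ` {..<m}"
  show "separable (wl_index n T) R lam (map (\<lambda>G. (emb G, \<tau> G)) Gs)"
  proof (rule separable_regular_profiles[OF T \<alpha> finite_wl_index _ _ _ _ _ R margin])
    show "finite D" "card D \<le> m"
      using card_image_le[of "{..<m}" "\<lambda>k. 2 * k"] by (simp_all add: D_def)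
    show "(t, regular_colour t d) \<in> wl_index n T" if d: "d \<in> D" "t \<le> T" for d t
    proof -
      obtain k where "k < m" "d = 2 * k"
        using d(1) unfolding D_def by blast
      then show ?thesis
        using regular_colour_in_wl_index[OF circulant[OF \<open>k < m\<close>]] k[OF \<open>k < m\<close>] d(2) by simp
    qed
    show "emb ` set Gs \<subseteq> regular_profile T \<alpha> ` D"
      using Gs emb unfolding D_def by auto
    show "inj_on emb (set Gs)"
      using inj Gs inj_on_subset by blast
  qed
qed

lemma vc_dim_ge_of_circulant_profiles:
  fixes emb :: "nat set set set \<Rightarrow> nat \<times> wlcol \<Rightarrow> real"
  assumes T: "0 < T" and \<alpha>: "0 < \<alpha>" and m: "2 * m \<le> n + 1"
    and emb: "\<And>k. k < m \<Longrightarrow> emb (iso_class n (circulant n k)) = regular_profile T \<alpha> (2 * k)"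
    and R: "sqrt (real T + 1) * \<alpha> \<le> R"
    and margin: "4 * lam\<^sup>2 * real m \<le> 2 * real T * \<alpha>\<^sup>2"
  shows "m \<le> vc_dim (graphs n) (H_class n (wl_index n T) {emb} R lam)"
proof -
  define G where "G k = iso_class n (circulant n k)" for k
  have "inj_on (emb \<circ> G) {..<m}"
  proof (rule inj_onI)
    fix k k' assume "k \<in> {..<m}" "k' \<in> {..<m}" "(emb \<circ> G) k = (emb \<circ> G) k'"
    then have "regular_profile T \<alpha> (2 * k) = regular_profile T \<alpha> (2 * k')"
      using emb by (simp add: G_def)
    with \<alpha> have "2 * k = 2 * k'"
      by (intro regular_profile_inj[OF T]) simp_all
    then show "k = k'"
      by simp
  qed
  then have inj: "inj_on G {..<m}" "inj_on emb (G ` {..<m})"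
    by (rule inj_on_imageI2, rule inj_on_imageI)
  have "shatters (H_class n (wl_index n T) {emb} R lam) (G ` {..<m})"
    unfolding G_def by (rule shatters_circulant_classes[OF T \<alpha> m emb inj(2)[unfolded G_def] R margin])
  then have "card (G ` {..<m}) \<le> vc_dim (graphs n) (H_class n (wl_index n T) {emb} R lam)"
    by (intro card_le_vc_dim[OF shatters_H_class_subset_graphs finite_graphs])
  then show ?thesis
    using inj(1) by (simp add: card_image)
qed

lemma Theta_of_quarter_lower_bound:
  fixes x v :: real
  assumes x: "8 \<le> x" "x \<le> 2 * real n"
    and lower: "\<And>m. 2 * m \<le> n + 1 \<Longrightarrow> 4 * real m \<le> x \<Longrightarrow> real m \<le> v"
    and upper: "v \<le> 2 * x + 1"
  shows "1 / 8 * x \<le> v \<and> v \<le> 3 * x"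
proof
  define m where "m = nat \<lfloor>x / 4\<rfloor>"
  have m: "real m \<le> x / 4" "x / 4 - 1 \<le> real m"
    unfolding m_def using x by linarith+
  then have "real m \<le> v"
    using x by (intro lower) linarith+
  with m x show "1 / 8 * x \<le> v"
    by linarith
  show "v \<le> 3 * x"
    using upper x by linarith
qed

lemma vc_dim_E_WL_Theta:
  assumes T: "0 < T" and lam: "0 < lam"
    and x: "(sqrt (real T + 1) * real n)\<^sup>2 / lam\<^sup>2 \<le> real n" "8 \<le> (sqrt (real T + 1) * real n)\<^sup>2 / lam\<^sup>2"
  shows "1 / 8 * ((sqrt (real T + 1) * real n)\<^sup>2 / lam\<^sup>2)
      \<le> real (vc_dim (graphs n) (H_class n (wl_index n T) (E_WL n T) (sqrt (real T + 1) * real n) lam))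
    \<and> real (vc_dim (graphs n) (H_class n (wl_index n T) (E_WL n T) (sqrt (real T + 1) * real n) lam))
      \<le> 3 * ((sqrt (real T + 1) * real n)\<^sup>2 / lam\<^sup>2)"
  unfolding E_WL_def
proof (rule Theta_of_quarter_lower_bound)
  have r: "(sqrt (real T + 1) * real n)\<^sup>2 = (real T + 1) * (real n)\<^sup>2"
    by (simp add: power_mult_distrib)
  show "(sqrt (real T + 1) * real n)\<^sup>2 / lam\<^sup>2 \<le> 2 * real n"
    using x(1) by simp
  show "real (vc_dim (graphs n) (H_class n (wl_index n T) {phi_wl n T} (sqrt (real T + 1) * real n) lam))
      \<le> 2 * ((sqrt (real T + 1) * real n)\<^sup>2 / lam\<^sup>2) + 1"
    by (rule vc_dim_H_class_le[OF lam])
  fix m assume m: "2 * m \<le> n + 1" "4 * real m \<le> (sqrt (real T + 1) * real n)\<^sup>2 / lam\<^sup>2"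
  have n: "0 < n"
    using x by simp
  have "m \<le> vc_dim (graphs n) (H_class n (wl_index n T) {phi_wl n T} (sqrt (real T + 1) * real n) lam)"
  proof (rule vc_dim_ge_of_circulant_profiles[OF T _ m(1)])
    show "phi_wl n T (iso_class n (circulant n k)) = regular_profile T (real n) (2 * k)" if "k < m" for k
      using that m(1) by (intro phi_wl_regular_on graph_on_circulant regular_on_circulant) auto
    have "4 * lam\<^sup>2 * real m \<le> (real T + 1) * (real n)\<^sup>2"
      using m(2) lam unfolding r by (simp add: field_simps)
    also have "\<dots> \<le> 2 * real T * (real n)\<^sup>2"
      using T by (intro mult_right_mono) auto
    finally show "4 * lam\<^sup>2 * real m \<le> 2 * real T * (real n)\<^sup>2" .
  qed (use n in auto)
  then show "real m \<le> real (vc_dim (graphs n) (H_class n (wl_index n T) {phi_wl n T} (sqrt (real T + 1) * real n) lam))"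
    by simp
qed (use x in auto)

lemma vc_dim_E_WL_norm_Theta:
  assumes T: "0 < T" and lam: "0 < lam"
    and x: "(sqrt (real T / (real T + 1)))\<^sup>2 / lam\<^sup>2 \<le> real n" "8 \<le> 1 / lam\<^sup>2"
  shows "1 / 8 * (1 / lam\<^sup>2) \<le> real (vc_dim (graphs n) (H_class n (wl_index n T) (E_WL_norm n T) 1 lam))
    \<and> real (vc_dim (graphs n) (H_class n (wl_index n T) (E_WL_norm n T) 1 lam)) \<le> 3 * (1 / lam\<^sup>2)"
  unfolding E_WL_norm_def
proof (rule Theta_of_quarter_lower_bound)
  have "1 / 2 * (1 / lam\<^sup>2) \<le> real T / (real T + 1) * (1 / lam\<^sup>2)"
    using T by (intro mult_right_mono) (auto simp: field_simps)
  then show "1 / lam\<^sup>2 \<le> 2 * real n"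
    using x(1) by simp
  show "real (vc_dim (graphs n) (H_class n (wl_index n T) {phi_wl_norm n T} 1 lam)) \<le> 2 * (1 / lam\<^sup>2) + 1"
    using vc_dim_H_class_le[OF lam, where r = 1] by simp
  fix m assume m: "2 * m \<le> n + 1" "4 * real m \<le> 1 / lam\<^sup>2"
  have n: "0 < n"
    using \<open>1 / lam\<^sup>2 \<le> 2 * real n\<close> x(2) by simp
  have "m \<le> vc_dim (graphs n) (H_class n (wl_index n T) {phi_wl_norm n T} 1 lam)"
  proof (rule vc_dim_ge_of_circulant_profiles[OF T _ m(1)])
    show "phi_wl_norm n T (iso_class n (circulant n k)) = regular_profile T (1 / sqrt (real T + 1)) (2 * k)"
      if "k < m" for k
      using that m(1) by (intro phi_wl_norm_regular_on graph_on_circulant regular_on_circulant) auto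
    have "4 * lam\<^sup>2 * real m \<le> 1"
      using m(2) lam by (simp add: field_simps)
    also have "\<dots> \<le> 2 * real T * (1 / sqrt (real T + 1))\<^sup>2"
      using T by (simp add: field_simps)
    finally show "4 * lam\<^sup>2 * real m \<le> 2 * real T * (1 / sqrt (real T + 1))\<^sup>2" .
  qed simp_all
  then show "real m \<le> real (vc_dim (graphs n) (H_class n (wl_index n T) {phi_wl_norm n T} 1 lam))"
    by simp
qed (use x in auto)

lemma Theta_constantsI:
  fixes x v :: "nat \<Rightarrow> real \<Rightarrow> nat \<Rightarrow> real"
  assumes "\<And>T lam n. P T \<Longrightarrow> Q lam \<Longrightarrow> R T lam n \<Longrightarrow> 8 \<le> x T lam n \<Longrightarrow>
      1 / 8 * x T lam n \<le> v T lam n \<and> v T lam n \<le> 3 * x T lam n"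
  shows "\<exists>c1>0. \<exists>c2>0. \<exists>M::real. \<forall>T lam n. P T \<longrightarrow> Q lam \<longrightarrow> R T lam n \<longrightarrow> M \<le> x T lam n \<longrightarrow>
      c1 * x T lam n \<le> v T lam n \<and> v T lam n \<le> c2 * x T lam n"
  using assms by (intro exI[of _ "1 / 8"] conjI[OF _ exI[of _ 3]] conjI[OF _ exI[of _ 8]]) auto

theorem theorem4:
  shows
  "(\<exists>c1>0. \<exists>c2>0. \<exists>M::real. \<forall>(T::nat) (lam::real) (n::nat).
      let r = sqrt (real T + 1) * real n in
      0 < T \<longrightarrow> 0 < lam \<longrightarrow> r\<^sup>2 / lam\<^sup>2 \<le> real n \<longrightarrow> M \<le> r\<^sup>2 / lam\<^sup>2 \<longrightarrow>
        c1 * (r\<^sup>2 / lam\<^sup>2) \<le> real (vc_dim (graphs n) (H_class n (wl_index n T) (E_WL n T) r lam))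
      \<and> real (vc_dim (graphs n) (H_class n (wl_index n T) (E_WL n T) r lam)) \<le> c2 * (r\<^sup>2 / lam\<^sup>2))
   \<and>
   (\<exists>c1>0. \<exists>c2>0. \<exists>M::real. \<forall>(T::nat) (lam::real) (n::nat).
      let r = sqrt (real T / (real T + 1)) in
      0 < T \<longrightarrow> 0 < lam \<longrightarrow> r\<^sup>2 / lam\<^sup>2 \<le> real n \<longrightarrow> M \<le> 1 / lam\<^sup>2 \<longrightarrow>
        c1 * (1 / lam\<^sup>2) \<le> real (vc_dim (graphs n) (H_class n (wl_index n T) (E_WL_norm n T) 1 lam))
      \<and> real (vc_dim (graphs n) (H_class n (wl_index n T) (E_WL_norm n T) 1 lam)) \<le> c2 * (1 / lam\<^sup>2))"
  unfolding Let_def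
  by (intro conjI Theta_constantsI vc_dim_E_WL_Theta vc_dim_E_WL_norm_Theta)

end
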